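(* Let $n$ be a positive integer, let $W\in M(n,n;\mathbb F_2)$ have all diagonal entries equal to $1$, and let $c\in\mathbb F_2^n$. Then the mean value of $|Wx+c|$ over all $x\in\mathbb F_2^n$ is $n/2$. In particular, $M(W,c)\ge n/2$, and $M(W,c)>n/2$ if the number of indices $i\in\{1,\dots,n\}$ with $c_i=1$ is not equal to $n/2$.
   Context: $\mathbb F_2=\{0,1\}$ is the field with two elements. For $u\in\mathbb F_2^n$, $|u|$ denotes the Hamming weight of $u$ (number of entries equal to $1$). $M(W,c)=\max\{|Wx+c| : x\in\mathbb F_2^n\}$. *)

theory Defs
  imports "HOL-Analysis.Analysis" "HOL-Library.Z2"
begin

text \<open>F_2 is the field type bit from HOL-Library.Z2; F_2^n is bit^'n and
  n x n matrices over F_2 are bit^'n^'n, with n = CARD('n).\<close>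

definition hweight :: "bit ^ 'n \<Rightarrow> nat" where
  "hweight u = card {i. u $ i = 1}"

definition Mval :: "bit ^ 'n ^ 'n \<Rightarrow> bit ^ 'n \<Rightarrow> nat" where
  "Mval W c = Max ((\<lambda>x. hweight (W *v x + c)) ` UNIV)"

end

theory Submission
  imports Defs
begin

text \<open>Flipping the coordinate \<open>x\<^sub>i\<close> flips \<open>(Wx + c)\<^sub>i\<close> because \<open>W\<^sub>i\<^sub>i = 1\<close>, so every
  coordinate of \<open>Wx + c\<close> equals 1 for exactly half of all \<open>x\<close>. Summing over the
  coordinates, the mean weight is \<open>n/2\<close>; hence some value is at least \<open>n/2\<close>, and if
  the value \<open>|c|\<close> at \<open>x = 0\<close> differs from the mean, some value exceeds it.\<close>

instance bit :: finite
proof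
  have "(UNIV :: bit set) = {0, 1}"
    by (auto intro: bit.exhaust)
  then show "finite (UNIV :: bit set)"
    by (metis finite.emptyI finite_insert)
qed

lemma exists_ge_mean:
  fixes f :: "'a \<Rightarrow> real" and m :: real
  assumes "finite A" "A \<noteq> {}" "sum f A = card A * m"
  shows "\<exists>x\<in>A. m \<le> f x"
proof (rule ccontr)
  assume "\<not> (\<exists>x\<in>A. m \<le> f x)"
  then have "sum f A < sum (\<lambda>_. m) A"
    using assms(1,2) by (intro sum_strict_mono) auto
  with assms(3) show False
    by simp
qed

lemma exists_gt_mean:
  fixes f :: "'a \<Rightarrow> real" and m :: real
  assumes "finite A" "sum f A = card A * m" "a \<in> A" "f a \<noteq> m"
  shows "\<exists>x\<in>A. m < f x"
proof (rule ccontr)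
  assume "\<not> (\<exists>x\<in>A. m < f x)"
  then have "\<forall>x\<in>A. f x \<le> m"
    by auto
  moreover have "f a < m"
    using calculation assms(3,4) by fastforce
  ultimately have "sum f A < sum (\<lambda>_. m) A"
    using assms(1,3) by (intro sum_strict_mono_ex1) auto
  with assms(2) show False
    by simp
qed

lemma card_ones_eq_half:
  fixes f :: "'a::{finite, ab_group_add} \<Rightarrow> bit"
  assumes flip: "\<And>x. f (x + v) = f x + 1"
  shows "2 * card {x. f x = 1} = CARD('a)"
proof -
  have image: "(\<lambda>x. x + v) ` {x. f x = 0} = {x. f x = 1}"
  proof (intro equalityI subsetI)
    fix y assume "y \<in> {x. f x = 1}"
    moreover have "f y = f (y - v) + 1"
      using flip[of "y - v"] by simp
    ultimately have "y - v \<in> {x. f x = 0}"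
      by (cases "f (y - v)") auto
    then show "y \<in> (\<lambda>x. x + v) ` {x. f x = 0}"
      by (rule rev_image_eqI) simp
  qed (auto simp: flip)
  have "inj (\<lambda>x. x + v)"
    by (simp add: inj_on_def)
  then have "card {x. f x = 0} = card {x. f x = 1}"
    by (metis image card_image inj_on_subset subset_UNIV)
  moreover have "{x. f x = 0} \<union> {x. f x = 1} = UNIV"
    using bit.exhaust by blast
  then have "card {x. f x = 0} + card {x. f x = 1} = CARD('a)"
    using card_Un_disjoint[of "{x. f x = 0}" "{x. f x = 1}"] by (auto simp: disjoint_iff)
  ultimately show ?thesis
    by simp
qed

lemma unit_diagonal_flip_coordinate:
  fixes W :: "bit ^ 'n ^ 'n"
  assumes "W $ i $ i = 1"
  shows "(W *v (x + axis i 1) + c) $ i = (W *v x + c) $ i + 1"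
proof -
  have "(W *v axis i 1) $ i = 1"
    using assms by (simp add: matrix_vector_mult_def axis_def if_distrib cong: if_cong)
  then show ?thesis
    by (simp add: algebra_simps)
qed

lemma sum_indicator_eq_card:
  "finite A \<Longrightarrow> (\<Sum>x\<in>A. if P x then 1 else 0) = card {x\<in>A. P x}"
  by (simp add: sum.inter_filter[symmetric])

lemma hweight_eq_sum_indicator: "hweight u = (\<Sum>i\<in>UNIV. if u $ i = 1 then 1 else 0)"
  by (simp add: hweight_def sum_indicator_eq_card)

lemma sum_hweight_unit_diagonal:
  fixes W :: "bit ^ 'n ^ 'n"
  assumes diag: "\<forall>i. W $ i $ i = 1"
  shows "2 * (\<Sum>x\<in>UNIV. hweight (W *v x + c)) = CARD('n) * CARD(bit ^ 'n)"
proof -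
  have "(\<Sum>x\<in>UNIV. hweight (W *v x + c))
      = (\<Sum>i\<in>UNIV. \<Sum>x\<in>UNIV. if (W *v x + c) $ i = 1 then 1 else 0)"
    unfolding hweight_eq_sum_indicator by (rule sum.swap)
  also have "\<dots> = (\<Sum>i\<in>UNIV. card {x :: bit ^ 'n. (W *v x + c) $ i = 1})"
    by (simp only: sum_indicator_eq_card finite UNIV_I simp_thms Collect_conj_eq Collect_const Int_UNIV_left)
  finally have "2 * (\<Sum>x\<in>UNIV. hweight (W *v x + c))
      = (\<Sum>i\<in>UNIV. 2 * card {x :: bit ^ 'n. (W *v x + c) $ i = 1})"
    by (simp only: sum_distrib_left)
  also have "\<dots> = (\<Sum>i\<in>(UNIV :: 'n set). CARD(bit ^ 'n))"
    using diag unit_diagonal_flip_coordinate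
    by (intro sum.cong refl card_ones_eq_half) blast
  finally show ?thesis
    by simp
qed

theorem lemma3p1:
  fixes W :: "bit ^ 'n ^ 'n" and c :: "bit ^ 'n"
  assumes diag: "\<forall>i. W $ i $ i = 1"
  shows "(\<Sum>x\<in>(UNIV :: (bit ^ 'n) set). real (hweight (W *v x + c)))
           / real (card (UNIV :: (bit ^ 'n) set)) = real CARD('n) / 2
         \<and> real (Mval W c) \<ge> real CARD('n) / 2
         \<and> (real (hweight c) \<noteq> real CARD('n) / 2 \<longrightarrow> real (Mval W c) > real CARD('n) / 2)"
proof -
  let ?g = "\<lambda>x. real (hweight (W *v x + c))"
  have sum: "sum ?g UNIV = CARD(bit ^ 'n) * (CARD('n) / 2)"
    using arg_cong[OF sum_hweight_unit_diagonal[OF diag, of c], of real]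
    by (simp add: algebra_simps)
  have le_Mval: "?g x \<le> Mval W c" for x
    by (simp add: Mval_def)
  have "CARD('n) / 2 \<le> real (Mval W c)"
  proof -
    obtain x where "CARD('n) / 2 \<le> ?g x"
      using exists_ge_mean[OF _ _ sum] by auto
    then show ?thesis
      using le_Mval[of x] by linarith
  qed
  moreover have "CARD('n) / 2 < real (Mval W c)" if off_mean: "real (hweight c) \<noteq> CARD('n) / 2"
  proof -
    obtain x where "CARD('n) / 2 < ?g x"
      using exists_gt_mean[OF _ sum, of 0] off_mean by auto
    then show ?thesis
      using le_Mval[of x] by linarith
  qed
  ultimately show ?thesis
    using sum by simp
qed

end
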